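(* Let $\mathbf{k}$ be a perfect field and $L/\mathbf{k}$ a quadratic extension. (1) Let $p\in\mathcal{Q}^L$ be a point of degree $2$ whose geometric components are not on the same ruling of $\mathcal{Q}^L_{\overline{\mathbf{k}}}\simeq\mathbb{P}^1_{\overline{\mathbf{k}}}\times\mathbb{P}^1_{\overline{\mathbf{k}}}$ and whose splitting field is $L$. Then there exists $\alpha\in\operatorname{Aut}_{\mathbf{k}}(\mathcal{Q}^L)$ such that $\alpha(p)=\{([1:0],[0:1]),([0:1],[1:0])\}$. (2) Let $r,s\in\mathcal{Q}^L(\mathbf{k})$ be two rational points not contained in the same ruling of $\mathcal{Q}^L_{\overline{\mathbf{k}}}$. Then there exists $\alpha\in\operatorname{Aut}_{\mathbf{k}}(\mathcal{Q}^L)$ such that $\alpha(r)=([1:0],[1:0])$ and $\alpha(s)=([0:1],[0:1])$.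
   Context: With $g$ the generator of $\operatorname{Gal}(L/\mathbf{k})$, $\mathcal{Q}^L$ is the $\mathbf{k}$-structure on $\mathbb{P}^1_L\times\mathbb{P}^1_L$ given by the Galois action $([u_0:u_1],[v_0:v_1])\mapsto([v_0^g:v_1^g],[u_0^g:u_1^g])$; points are written in the coordinates of $\mathbb{P}^1_L\times\mathbb{P}^1_L$. A point of degree $d$ is a Galois orbit of cardinality $d$ of $\overline{\mathbf{k}}$-points, its geometric components being the points of the orbit; its splitting field is the smallest normal extension over which all of them are defined. "Two points are on the same ruling" means they lie on a common fibre of one of the two projections of $\mathbb{P}^1\times\mathbb{P}^1$. *)

theory Defs
  imports "HOL-Computational_Algebra.Polynomial"
begin

text \<open>The type 'a plays the role of an algebraic closure of the base field k,
  which is a subfield (carrier set) of 'a. A point of the projective line over 'a is represented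
  by the punctured line {c u | c nonzero} of a nonzero vector u; [u0:u1] is proj_pt (u0,u1).\<close>

definition is_subfield :: "'a::field set \<Rightarrow> bool" where
  "is_subfield F \<longleftrightarrow> 0 \<in> F \<and> 1 \<in> F \<and>
     (\<forall>x\<in>F. \<forall>y\<in>F. x + y \<in> F \<and> x * y \<in> F) \<and>
     (\<forall>x\<in>F. - x \<in> F \<and> inverse x \<in> F)"

definition alg_closed_field :: "'a::field itself \<Rightarrow> bool" where
  "alg_closed_field _ \<longleftrightarrow> (\<forall>p :: 'a poly. degree p > 0 \<longrightarrow> (\<exists>x. poly p x = 0))"

definition algebraic_over :: "'a::field set \<Rightarrow> bool" where
  "algebraic_over k \<longleftrightarrow> (\<forall>x::'a. \<exists>p. p \<noteq> 0 \<and> (\<forall>i. coeff p i \<in> k) \<and> poly p x = 0)"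

definition perfect_subfield :: "'a::field set \<Rightarrow> bool" where
  "perfect_subfield k \<longleftrightarrow> CHAR('a) = 0 \<or> (\<forall>x\<in>k. \<exists>y\<in>k. y ^ CHAR('a) = x)"

definition quadratic_ext :: "'a::field set \<Rightarrow> 'a set \<Rightarrow> bool" where
  "quadratic_ext k L \<longleftrightarrow> is_subfield L \<and> k \<subseteq> L \<and>
     (\<exists>b1\<in>L. \<exists>b2\<in>L. \<forall>x\<in>L. \<exists>!c. c \<in> k \<times> k \<and> x = fst c * b1 + snd c * b2)"

definition Gal :: "'a::field set \<Rightarrow> ('a \<Rightarrow> 'a) set" where
  "Gal F = {\<sigma>. bij \<sigma> \<and> (\<forall>a b. \<sigma> (a + b) = \<sigma> a + \<sigma> b \<and> \<sigma> (a * b) = \<sigma> a * \<sigma> b) \<and>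
               (\<forall>a\<in>F. \<sigma> a = a)}"

definition proj_pt :: "'a::field \<times> 'a \<Rightarrow> ('a \<times> 'a) set" where
  "proj_pt u = {(c * fst u, c * snd u) | c. c \<noteq> 0}"

definition P1 :: "('a::field \<times> 'a) set set" where
  "P1 = {proj_pt u | u. u \<noteq> (0, 0)}"

definition QP :: "(('a::field \<times> 'a) set \<times> ('a \<times> 'a) set) set" where
  "QP = P1 \<times> P1"

definition conj_pt :: "('a \<Rightarrow> 'a) \<Rightarrow> ('a \<times> 'a) set \<Rightarrow> ('a \<times> 'a) set" where
  "conj_pt \<sigma> x = (\<lambda>(a, b). (\<sigma> a, \<sigma> b)) ` x"

text \<open>The Galois action of \<sigma> in Gal(kbar/k) on geometric points of Q^L: if \<sigma> restricts to the
  generator g of Gal(L/k), coordinates are conjugated and the factors swapped; if \<sigma> is trivial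
  on L, coordinates are just conjugated.\<close>
definition tw_act :: "'a::field set \<Rightarrow> ('a \<Rightarrow> 'a) \<Rightarrow> ('a \<times> 'a) set \<times> ('a \<times> 'a) set
     \<Rightarrow> ('a \<times> 'a) set \<times> ('a \<times> 'a) set" where
  "tw_act L \<sigma> z = (if (\<forall>a\<in>L. \<sigma> a = a) then (conj_pt \<sigma> (fst z), conj_pt \<sigma> (snd z))
                     else (conj_pt \<sigma> (snd z), conj_pt \<sigma> (fst z)))"

definition rational_point :: "'a::field set \<Rightarrow> 'a set \<Rightarrow> _ \<Rightarrow> bool" where
  "rational_point k L z \<longleftrightarrow> z \<in> QP \<and> (\<forall>\<sigma>\<in>Gal k. tw_act L \<sigma> z = z)"

text \<open>A closed point of degree d: a Galois orbit of geometric points of cardinality d.\<close>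
definition closed_point_deg :: "'a::field set \<Rightarrow> 'a set \<Rightarrow> _ set \<Rightarrow> nat \<Rightarrow> bool" where
  "closed_point_deg k L p d \<longleftrightarrow>
     (\<exists>z\<in>QP. p = {tw_act L \<sigma> z | \<sigma>. \<sigma> \<in> Gal k}) \<and> card p = d"

definition normal_intermediate :: "'a::field set \<Rightarrow> 'a set \<Rightarrow> bool" where
  "normal_intermediate k F \<longleftrightarrow> is_subfield F \<and> k \<subseteq> F \<and> (\<forall>\<sigma>\<in>Gal k. \<sigma> ` F = F)"

definition defined_over :: "'a::field set \<Rightarrow> 'a set \<Rightarrow> _ \<Rightarrow> bool" where
  "defined_over L F z \<longleftrightarrow> (\<forall>\<sigma>\<in>Gal F. tw_act L \<sigma> z = z)"

definition splitting_field :: "'a::field set \<Rightarrow> 'a set \<Rightarrow> _ set \<Rightarrow> 'a set \<Rightarrow> bool" where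
  "splitting_field k L p F \<longleftrightarrow> normal_intermediate k F \<and> (\<forall>z\<in>p. defined_over L F z) \<and>
     (\<forall>F'. normal_intermediate k F' \<and> (\<forall>z\<in>p. defined_over L F' z) \<longrightarrow> F \<subseteq> F')"

definition same_ruling :: "_ \<times> _ \<Rightarrow> _ \<times> _ \<Rightarrow> bool" where
  "same_ruling z w \<longleftrightarrow> fst z = fst w \<or> snd z = snd w"

text \<open>Action of an invertible 2x2 matrix (a b; c d) on P1.\<close>
definition mat_act :: "'a::field \<times> 'a \<times> 'a \<times> 'a \<Rightarrow> ('a \<times> 'a) set \<Rightarrow> ('a \<times> 'a) set" where
  "mat_act M x = (case M of (a, b, c, d) \<Rightarrow> (\<lambda>(u0, u1). (a * u0 + b * u1, c * u0 + d * u1)) ` x)"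

definition invertible2 :: "'a::field \<times> 'a \<times> 'a \<times> 'a \<Rightarrow> bool" where
  "invertible2 M \<longleftrightarrow> (case M of (a, b, c, d) \<Rightarrow> a * d - b * c \<noteq> 0)"

text \<open>Automorphisms of P1 x P1 over kbar: (PGL2 x PGL2) semidirect Z/2.\<close>
definition geom_aut :: "(_ \<Rightarrow> ('a::field \<times> 'a) set \<times> ('a \<times> 'a) set) \<Rightarrow> bool" where
  "geom_aut \<alpha> \<longleftrightarrow> (\<exists>A B. invertible2 A \<and> invertible2 B \<and>
     ((\<forall>z\<in>QP. \<alpha> z = (mat_act A (fst z), mat_act B (snd z))) \<or>
      (\<forall>z\<in>QP. \<alpha> z = (mat_act A (snd z), mat_act B (fst z)))))"

text \<open>Aut_k(Q^L): geometric automorphisms commuting with the Galois action (Galois descent).\<close>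
definition aut_QL :: "'a::field set \<Rightarrow> 'a set \<Rightarrow> (_ \<Rightarrow> ('a \<times> 'a) set \<times> ('a \<times> 'a) set) \<Rightarrow> bool" where
  "aut_QL k L \<alpha> \<longleftrightarrow> geom_aut \<alpha> \<and> (\<forall>\<sigma>\<in>Gal k. \<forall>z\<in>QP. \<alpha> (tw_act L \<sigma> z) = tw_act L \<sigma> (\<alpha> z))"

end

(*
  Aut_k(Q^L) contains the maps (u, v) |-> (A u, B v) for invertible A, B such that every element of
  Gal(kbar/k) acting trivially on L fixes A and B and every other one exchanges them.

  For (2) write r = (x, x') and s = (y, y'); the nontrivial Galois elements exchange x with x' and
  y with y'. Take a k-rational vector t off the points x, y of P^1 (hence also off x', y') and split
  it as t = v + w with v on x and w on y. The adjugate A of the matrix with columns v, w maps x, y to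
  [1:0], [0:1], and it depends only on (t, x, y); so its Galois conjugate is the matrix B obtained in
  the same way from (t, x', y'), and (A, B) is the required automorphism.

  For (1) write p = {(a, b), (tau b, tau a)} for some tau moving L. As Gal(L/k) has order two, every
  element of Gal(kbar/k) moving L acts on a, b, tau a, tau b as tau does, so (a, tau a) and
  (tau b, b) are rational points not on a common ruling, and (2) applied to them normalises p.
*)

theory Submission
  imports Defs "HOL-Library.Product_Plus"
begin

lemma Gal_add: "\<sigma> \<in> Gal F \<Longrightarrow> \<sigma> (a + b) = \<sigma> a + \<sigma> b"
  and Gal_mult: "\<sigma> \<in> Gal F \<Longrightarrow> \<sigma> (a * b) = \<sigma> a * \<sigma> b"
  and Gal_fixes: "\<sigma> \<in> Gal F \<Longrightarrow> a \<in> F \<Longrightarrow> \<sigma> a = a"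
  and Gal_inj: "\<sigma> \<in> Gal F \<Longrightarrow> \<sigma> a = \<sigma> b \<longleftrightarrow> a = b"
  by (auto simp: Gal_def bij_def inj_eq)

lemma Gal_0: "\<sigma> \<in> Gal F \<Longrightarrow> \<sigma> (0::'a::field) = 0"
  using Gal_add[of \<sigma> F 0 0] by (metis add.right_neutral add_left_cancel)

lemma Gal_uminus: "\<sigma> \<in> Gal F \<Longrightarrow> \<sigma> (- a) = - \<sigma> (a::'a::field)"
  using Gal_add[of \<sigma> F a "- a"] Gal_0[of \<sigma> F] by (simp add: add_eq_0_iff)

lemma Gal_diff: "\<sigma> \<in> Gal F \<Longrightarrow> \<sigma> (a - b) = \<sigma> a - \<sigma> (b::'a::field)"
  using Gal_add[of \<sigma> F a "- b"] Gal_uminus[of \<sigma> F b] by simp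

lemma Gal_eq_0_iff: "\<sigma> \<in> Gal F \<Longrightarrow> \<sigma> a = 0 \<longleftrightarrow> (a::'a::field) = 0"
  by (metis Gal_0 Gal_inj)

lemma Gal_surj: "\<sigma> \<in> Gal F \<Longrightarrow> surj \<sigma>"
  by (simp add: Gal_def bij_def)

lemma id_in_Gal: "id \<in> Gal F"
  by (simp add: Gal_def)

lemma Gal_compI:
  assumes "\<sigma> \<in> Gal F" "\<tau> \<in> Gal F" "\<forall>a\<in>G. \<sigma> (\<tau> a) = a"
  shows "\<sigma> \<circ> \<tau> \<in> Gal G"
  using assms by (auto simp: Gal_def intro: bij_comp)

lemma in_Gal_if_fixes: "\<sigma> \<in> Gal F \<Longrightarrow> \<forall>a\<in>G. \<sigma> a = a \<Longrightarrow> \<sigma> \<in> Gal G"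
  by (simp add: Gal_def)

definition det2 :: "'a::field \<times> 'a \<Rightarrow> 'a \<times> 'a \<Rightarrow> 'a" where
  "det2 u v = fst u * snd v - snd u * fst v"

lemma proj_pt_mem: "u \<in> proj_pt u"
  unfolding proj_pt_def by (rule CollectI, rule exI[of _ 1]) simp

lemma proj_pt_smult: "(c::'a::field) \<noteq> 0 \<Longrightarrow> proj_pt (c * fst u, c * snd u) = proj_pt u"
  unfolding proj_pt_def
  by (auto simp: mult.assoc) (metis nonzero_divide_eq_eq mult_eq_0_iff)

lemma P1_eq_proj_pt:
  assumes "a \<in> P1" "v \<in> a"
  shows "v \<noteq> (0::'a::field, 0) \<and> a = proj_pt v"
proof -
  obtain u where "u \<noteq> (0, 0)" "a = proj_pt u"
    using assms(1) by (auto simp: P1_def)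
  moreover obtain c where "c \<noteq> 0" "v = (c * fst u, c * snd u)"
    using assms(2) \<open>a = proj_pt u\<close> by (auto simp: proj_pt_def)
  ultimately show ?thesis
    using proj_pt_smult[of c u] by (cases u) auto
qed

lemma proj_pt_eq_iff:
  assumes "u \<noteq> (0::'a::field, 0)" "v \<noteq> (0, 0)"
  shows "proj_pt u = proj_pt v \<longleftrightarrow> det2 u v = 0"
proof
  assume "proj_pt u = proj_pt v"
  then obtain c where "u = (c * fst v, c * snd v)"
    using proj_pt_mem[of u] by (auto simp: proj_pt_def)
  then show "det2 u v = 0" by (simp add: det2_def)
next
  assume det: "det2 u v = 0"
  obtain c where "c \<noteq> 0" "u = (c * fst v, c * snd v)"
  proof (cases "fst v = 0")
    case True
    then have "snd v \<noteq> 0" using assms(2) by (cases v) auto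
    then show ?thesis
      using that[of "snd u / snd v"] det True assms(1) by (cases u) (auto simp: det2_def)
  next
    case False
    with det assms(1) have "fst u \<noteq> 0" by (cases u) (auto simp: det2_def)
    with False show ?thesis
      using that[of "fst u / fst v"] det by (cases u) (auto simp: det2_def field_simps)
  qed
  then show "proj_pt u = proj_pt v" using proj_pt_smult by metis
qed

lemma det2_ne_0_if_distinct:
  assumes "a \<in> P1" "b \<in> P1" "a \<noteq> b" "v \<in> a" "w \<in> b"
  shows "det2 v w \<noteq> (0::'a::field)"
proof -
  have "v \<noteq> (0, 0)" "w \<noteq> (0, 0)" "proj_pt v \<noteq> proj_pt w"
    using assms P1_eq_proj_pt by metis+
  then show ?thesis using proj_pt_eq_iff by blast
qed

lemma proj_pt_image: "proj_pt u = (\<lambda>c. (c * fst u, c * snd u)) ` {c. c \<noteq> 0}"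
  unfolding proj_pt_def by auto

lemma mat_act_proj_pt:
  "mat_act (a, b, c, d) (proj_pt u) = proj_pt (a * fst u + b * snd u, c * fst u + d * snd u)"
  unfolding mat_act_def proj_pt_image image_image by (auto simp: algebra_simps intro!: image_cong)

lemma mem_conj_pt: "u \<in> x \<Longrightarrow> (\<sigma> (fst u), \<sigma> (snd u)) \<in> conj_pt \<sigma> x"
  unfolding conj_pt_def by force

lemma conj_pt_comp: "conj_pt \<sigma> (conj_pt \<tau> x) = conj_pt (\<sigma> \<circ> \<tau>) x"
  unfolding conj_pt_def by (auto simp: image_image intro!: image_cong)

lemma conj_pt_id: "conj_pt id x = x"
  unfolding conj_pt_def by auto

lemma conj_pt_inj: "\<sigma> \<in> Gal F \<Longrightarrow> conj_pt \<sigma> a = conj_pt \<sigma> b \<longleftrightarrow> a = b"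
  unfolding conj_pt_def by (rule inj_image_eq_iff) (auto simp: inj_def Gal_inj)

lemma conj_pt_proj_pt:
  assumes "\<sigma> \<in> Gal F"
  shows "conj_pt \<sigma> (proj_pt u) = proj_pt (\<sigma> (fst u), \<sigma> (snd u))"
proof -
  have "\<sigma> ` {c. c \<noteq> 0} = {c. c \<noteq> 0}"
    using Gal_surj[OF assms] Gal_eq_0_iff[OF assms] by (auto simp: surj_def image_iff)
  moreover have "conj_pt \<sigma> (proj_pt u) = (\<lambda>c. (c * \<sigma> (fst u), c * \<sigma> (snd u))) ` \<sigma> ` {c. c \<noteq> 0}"
    unfolding conj_pt_def proj_pt_image image_image by (simp add: Gal_mult[OF assms])
  ultimately show ?thesis by (simp add: proj_pt_image)
qed

lemma conj_pt_P1: "\<sigma> \<in> Gal F \<Longrightarrow> a \<in> P1 \<Longrightarrow> conj_pt \<sigma> a \<in> P1"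
proof -
  assume "\<sigma> \<in> Gal F" "a \<in> P1"
  then obtain u where "u \<noteq> (0, 0)" "a = proj_pt u" by (auto simp: P1_def)
  moreover have "(\<sigma> (fst u), \<sigma> (snd u)) \<noteq> (0, 0)"
    using \<open>u \<noteq> (0, 0)\<close> Gal_eq_0_iff[OF \<open>\<sigma> \<in> Gal F\<close>] by (cases u) auto
  ultimately show ?thesis
    unfolding P1_def using conj_pt_proj_pt[OF \<open>\<sigma> \<in> Gal F\<close>] by blast
qed

definition conj_mat :: "('a \<Rightarrow> 'a) \<Rightarrow> 'a \<times> 'a \<times> 'a \<times> 'a \<Rightarrow> 'a \<times> 'a \<times> 'a \<times> 'a" where
  "conj_mat \<sigma> M = (case M of (a, b, c, d) \<Rightarrow> (\<sigma> a, \<sigma> b, \<sigma> c, \<sigma> d))"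

lemma conj_pt_mat_act:
  "\<sigma> \<in> Gal F \<Longrightarrow> conj_pt \<sigma> (mat_act M x) = mat_act (conj_mat \<sigma> M) (conj_pt \<sigma> x)"
  unfolding conj_pt_def mat_act_def conj_mat_def
  by (cases M) (auto simp: image_image Gal_add Gal_mult intro!: image_cong)

section \<open>A Galois-equivariant normalising matrix\<close>

definition general_position :: "'a::field \<times> 'a \<Rightarrow> ('a \<times> 'a) set \<Rightarrow> ('a \<times> 'a) set \<Rightarrow> bool" where
  "general_position t a b \<longleftrightarrow>
     a \<in> P1 \<and> b \<in> P1 \<and> a \<noteq> b \<and> t \<noteq> (0, 0) \<and> proj_pt t \<noteq> a \<and> proj_pt t \<noteq> b"

lemma general_position_unique_split:
  assumes "general_position t a b"
  shows "\<exists>!v. v \<in> a \<and> t - v \<in> b"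
proof -
  obtain p q where p: "p \<noteq> (0, 0)" "a = proj_pt p" and q: "q \<noteq> (0, 0)" "b = proj_pt q"
    using assms by (auto simp: general_position_def P1_def)
  have t: "t \<noteq> (0, 0)" "proj_pt t \<noteq> a" "proj_pt t \<noteq> b"
    using assms by (auto simp: general_position_def)
  define D where "D = det2 p q"
  define l where "l = det2 t q / D"
  define m where "m = det2 p t / D"
  have "D \<noteq> 0"
    using assms p q proj_pt_mem det2_ne_0_if_distinct unfolding D_def general_position_def by metis
  moreover have "det2 t q \<noteq> 0" "det2 p t \<noteq> 0"
    using proj_pt_eq_iff p q t by metis+
  ultimately have "l \<noteq> 0" "m \<noteq> 0" by (simp_all add: l_def m_def)
  have "det2 t q * fst p + det2 p t * fst q = fst t * D"
    "det2 t q * snd p + det2 p t * snd q = snd t * D"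
    unfolding D_def det2_def by algebra+
  with \<open>D \<noteq> 0\<close> have cramer: "t = (l * fst p + m * fst q, l * snd p + m * snd q)"
    unfolding l_def m_def by (simp add: prod_eq_iff field_simps)
  show ?thesis
  proof
    have "t - (l * fst p, l * snd p) = (m * fst q, m * snd q)"
      by (subst cramer) simp
    then show "(l * fst p, l * snd p) \<in> a \<and> t - (l * fst p, l * snd p) \<in> b"
      using \<open>l \<noteq> 0\<close> \<open>m \<noteq> 0\<close> p(2) q(2) unfolding proj_pt_def by auto
  next
    fix v assume "v \<in> a \<and> t - v \<in> b"
    then obtain c d where v: "v = (c * fst p, c * snd p)" and "t - v = (d * fst q, d * snd q)"
      using p q by (auto simp: proj_pt_def)
    then have "fst t = c * fst p + d * fst q" "snd t = c * snd p + d * snd q"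
      by (auto simp: prod_eq_iff diff_eq_eq)
    then have "det2 t q = c * D" by (simp add: D_def det2_def algebra_simps)
    then show "v = (l * fst p, l * snd p)"
      using \<open>D \<noteq> 0\<close> v by (simp add: l_def)
  qed
qed

definition split_point :: "'a::field \<times> 'a \<Rightarrow> ('a \<times> 'a) set \<Rightarrow> ('a \<times> 'a) set \<Rightarrow> 'a \<times> 'a" where
  "split_point t a b = (THE v. v \<in> a \<and> t - v \<in> b)"

text \<open>The adjugate of the matrix with columns v and w, in the encoding (a, b, c, d) of
  [[a, b], [c, d]] used by mat_act.\<close>
definition norm_mat :: "'a::field \<times> 'a \<Rightarrow> ('a \<times> 'a) set \<Rightarrow> ('a \<times> 'a) set \<Rightarrow> 'a \<times> 'a \<times> 'a \<times> 'a" where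
  "norm_mat t a b = (let v = split_point t a b; w = t - v in (snd w, - fst w, - snd v, fst v))"

lemma split_point:
  "general_position t a b \<Longrightarrow> split_point t a b \<in> a \<and> t - split_point t a b \<in> b"
  unfolding split_point_def by (rule theI') (rule general_position_unique_split)

lemma split_point_eqI:
  "general_position t a b \<Longrightarrow> v \<in> a \<Longrightarrow> t - v \<in> b \<Longrightarrow> split_point t a b = v"
  unfolding split_point_def by (rule the1_equality) (simp_all add: general_position_unique_split)

lemma norm_mat_split:
  assumes "general_position t a b"
  obtains v w where "a = proj_pt v" "b = proj_pt w" "det2 v w \<noteq> 0"
    "norm_mat t a b = (snd w, - fst w, - snd v, fst v)"
proof -
  define v where "v = split_point t a b"
  define w where "w = t - v"
  have "v \<in> a" "w \<in> b" using split_point[OF assms] by (simp_all add: v_def w_def)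
  then have "a = proj_pt v" "b = proj_pt w" "det2 v w \<noteq> 0"
    using assms P1_eq_proj_pt det2_ne_0_if_distinct unfolding general_position_def by blast+
  moreover have "norm_mat t a b = (snd w, - fst w, - snd v, fst v)"
    by (simp add: norm_mat_def v_def w_def Let_def)
  ultimately show ?thesis by (rule that)
qed

lemma norm_mat_invertible: "general_position t a b \<Longrightarrow> invertible2 (norm_mat t a b)"
  by (erule norm_mat_split) (simp add: invertible2_def det2_def algebra_simps)

lemma mat_act_norm_mat:
  assumes "general_position t a b"
  shows "mat_act (norm_mat t a b) a = proj_pt (1, 0) \<and> mat_act (norm_mat t a b) b = proj_pt (0, 1)"
proof -
  obtain v w where vw: "a = proj_pt v" "b = proj_pt w" "det2 v w \<noteq> 0"
    and M: "norm_mat t a b = (snd w, - fst w, - snd v, fst v)"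
    using norm_mat_split[OF assms] by blast
  show ?thesis
    using proj_pt_smult[OF vw(3), of "(1, 0)"] proj_pt_smult[OF vw(3), of "(0, 1)"]
    unfolding M by (simp add: vw(1,2) mat_act_proj_pt det2_def algebra_simps)
qed

lemma general_position_conj_pt:
  assumes "general_position t a b" "\<sigma> \<in> Gal F" "\<sigma> (fst t) = fst t" "\<sigma> (snd t) = snd t"
  shows "general_position t (conj_pt \<sigma> a) (conj_pt \<sigma> b)"
proof -
  have "conj_pt \<sigma> (proj_pt t) = proj_pt t"
    using assms(3,4) by (simp add: conj_pt_proj_pt[OF assms(2)])
  then show ?thesis
    using assms(1) conj_pt_P1[OF assms(2)] conj_pt_inj[OF assms(2)]
    unfolding general_position_def by metis
qed

lemma conj_mat_norm_mat:
  assumes "general_position t a b" "\<sigma> \<in> Gal F" "\<sigma> (fst t) = fst t" "\<sigma> (snd t) = snd t"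
  shows "conj_mat \<sigma> (norm_mat t a b) = norm_mat t (conj_pt \<sigma> a) (conj_pt \<sigma> b)"
proof -
  define v where "v = split_point t a b"
  have diff: "t - (x, y) = (fst t - x, snd t - y)" for x y by (simp add: prod_eq_iff)
  have "v \<in> a" "t - v \<in> b" using split_point[OF assms(1)] by (simp_all add: v_def)
  then have "(\<sigma> (fst v), \<sigma> (snd v)) \<in> conj_pt \<sigma> a"
    "t - (\<sigma> (fst v), \<sigma> (snd v)) \<in> conj_pt \<sigma> b"
    using mem_conj_pt[of "t - v" b \<sigma>] mem_conj_pt[of v a \<sigma>] assms(3,4)
    by (simp_all add: Gal_diff[OF assms(2)] diff)
  then have "split_point t (conj_pt \<sigma> a) (conj_pt \<sigma> b) = (\<sigma> (fst v), \<sigma> (snd v))"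
    by (intro split_point_eqI general_position_conj_pt[OF assms])
  then show ?thesis
    using assms(3,4)
    by (simp add: norm_mat_def conj_mat_def Let_def v_def Gal_diff[OF assms(2)] Gal_uminus[OF assms(2)])
qed

section \<open>Quadratic extensions\<close>

lemma subfield_closed:
  assumes "is_subfield k" "x \<in> k" "y \<in> k"
  shows "x + y \<in> k" "x * y \<in> k" "- x \<in> k" "x - y \<in> k" "x / y \<in> k"
  using assms unfolding is_subfield_def diff_conv_add_uminus divide_inverse by blast+

lemma span_eq_span_one:
  assumes "is_subfield k" "e1 \<in> k" "e2 \<in> k" "c1 \<in> k" "c2 \<in> k"
    and "e2 \<noteq> 0" "1 = e1 * b1 + e2 * b2"
  shows "\<exists>d1\<in>k. \<exists>d2\<in>k. c1 * b1 + c2 * b2 = d1 + d2 * b1"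
proof (intro bexI)
  have "c2 = c2 * e1 * b1 + c2 * e2 * b2"
    using assms(7) by (metis distrib_left mult.assoc mult_1_right)
  then show "c1 * b1 + c2 * b2 = c2 / e2 + (c1 - c2 * e1 / e2) * b1"
    using assms(6) by (simp add: field_simps)
  show "c2 / e2 \<in> k" "c1 - c2 * e1 / e2 \<in> k"
    using assms(1-5) by (simp_all add: subfield_closed)
qed

lemma quadratic_ext_generator:
  assumes "is_subfield k" "quadratic_ext k L"
  obtains \<theta> where "\<theta> \<in> L" "\<forall>a\<in>L. \<exists>d1\<in>k. \<exists>d2\<in>k. a = d1 + d2 * \<theta>"
proof -
  obtain b1 b2 where b: "b1 \<in> L" "b2 \<in> L"
    and basis: "\<forall>x\<in>L. \<exists>!c. c \<in> k \<times> k \<and> x = fst c * b1 + snd c * b2"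
    using assms(2) unfolding quadratic_ext_def by blast
  have span: "\<forall>x\<in>L. \<exists>c1\<in>k. \<exists>c2\<in>k. x = c1 * b1 + c2 * b2"
  proof
    fix x assume "x \<in> L"
    then obtain c where "c \<in> k \<times> k" "x = fst c * b1 + snd c * b2" using basis by blast
    then show "\<exists>c1\<in>k. \<exists>c2\<in>k. x = c1 * b1 + c2 * b2" by (cases c) auto
  qed
  have "1 \<in> L" using assms(2) by (simp add: quadratic_ext_def is_subfield_def)
  then obtain e1 e2 where e: "e1 \<in> k" "e2 \<in> k" "1 = e1 * b1 + e2 * b2"
    using span by blast
  show ?thesis
  proof (cases "e2 = 0")
    case True
    with e have "e1 \<noteq> 0" "1 = e2 * b2 + e1 * b1" by auto
    then have "\<forall>x\<in>L. \<exists>d1\<in>k. \<exists>d2\<in>k. x = d1 + d2 * b2"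
      using span span_eq_span_one[OF assms(1) e(2,1)] by (metis add.commute)
    with b(2) show ?thesis by (rule that)
  next
    case False
    then have "\<forall>x\<in>L. \<exists>d1\<in>k. \<exists>d2\<in>k. x = d1 + d2 * b1"
      using span span_eq_span_one[OF assms(1) e(1,2)] e(3) by metis
    with b(1) show ?thesis by (rule that)
  qed
qed

lemma Gal_comp_nontrivial_in_Gal:
  assumes k: "is_subfield k" and L: "quadratic_ext k L"
    and \<sigma>: "\<sigma> \<in> Gal k" "\<not> (\<forall>a\<in>L. \<sigma> a = a)" and \<tau>: "\<tau> \<in> Gal k" "\<not> (\<forall>a\<in>L. \<tau> a = a)"
  shows "\<sigma> \<circ> \<tau> \<in> Gal L"
proof -
  obtain \<theta> where "\<theta> \<in> L" and gen: "\<forall>a\<in>L. \<exists>d1\<in>k. \<exists>d2\<in>k. a = d1 + d2 * \<theta>"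
    using quadratic_ext_generator[OF k L] by blast
  moreover have "\<theta> * \<theta> \<in> L" using L \<open>\<theta> \<in> L\<close> by (simp add: quadratic_ext_def is_subfield_def)
  ultimately obtain c1 c2 where c: "c1 \<in> k" "c2 \<in> k" "\<theta> * \<theta> = c1 + c2 * \<theta>" by blast
  have image: "\<rho> (d1 + d2 * \<theta>) = d1 + d2 * \<rho> \<theta>" if "\<rho> \<in> Gal k" "d1 \<in> k" "d2 \<in> k" for \<rho> d1 d2
    using that by (simp add: Gal_add Gal_mult Gal_fixes)
  have conjugate: "\<rho> \<theta> = c2 - \<theta>" if \<rho>: "\<rho> \<in> Gal k" "\<not> (\<forall>a\<in>L. \<rho> a = a)" for \<rho>
  proof -
    have "\<rho> \<theta> \<noteq> \<theta>"
    proof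
      assume "\<rho> \<theta> = \<theta>"
      have "\<rho> a = a" if "a \<in> L" for a
        using gen \<open>a \<in> L\<close> image[OF \<rho>(1)] \<open>\<rho> \<theta> = \<theta>\<close> by force
      with \<rho>(2) show False by blast
    qed
    moreover have "\<rho> \<theta> * \<rho> \<theta> = c1 + c2 * \<rho> \<theta>"
      using image[OF \<rho>(1) c(1,2)] c(3) Gal_mult[OF \<rho>(1)] by metis
    then have "(\<rho> \<theta> - \<theta>) * (\<rho> \<theta> - (c2 - \<theta>)) = 0"
      using c(3) by (simp add: algebra_simps)
    ultimately show ?thesis by simp
  qed
  have "\<sigma> (\<tau> a) = a" if "a \<in> L" for a
  proof -
    obtain d1 d2 where d: "d1 \<in> k" "d2 \<in> k" "a = d1 + d2 * \<theta>" using gen \<open>a \<in> L\<close> by blast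
    then have "\<tau> a = d1 + d2 * \<tau> \<theta>" using image[OF \<tau>(1)] by simp
    then have "\<tau> a = (d1 + d2 * c2) + (- d2) * \<theta>"
      using conjugate[OF \<tau>] by (simp add: algebra_simps)
    moreover have "d1 + d2 * c2 \<in> k" "- d2 \<in> k" using k c d by (simp_all add: subfield_closed)
    ultimately have "\<sigma> (\<tau> a) = (d1 + d2 * c2) + (- d2) * \<sigma> \<theta>"
      using image[OF \<sigma>(1)] by metis
    then show ?thesis
      using d(3) conjugate[OF \<sigma>] by (simp add: algebra_simps)
  qed
  then show ?thesis using Gal_compI[OF \<sigma>(1) \<tau>(1)] by blast
qed

section \<open>Automorphisms of Q^L\<close>

definition mat_act_pair ::
    "'a::field \<times> 'a \<times> 'a \<times> 'a \<Rightarrow> 'a \<times> 'a \<times> 'a \<times> 'a \<Rightarrow> ('a \<times> 'a) set \<times> ('a \<times> 'a) set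
       \<Rightarrow> ('a \<times> 'a) set \<times> ('a \<times> 'a) set" where
  "mat_act_pair A B z = (mat_act A (fst z), mat_act B (snd z))"

lemma aut_QL_mat_act_pair:
  assumes "invertible2 A" "invertible2 B"
    and "\<forall>\<sigma>\<in>Gal k. conj_mat \<sigma> A = (if \<forall>a\<in>L. \<sigma> a = a then A else B) \<and>
                     conj_mat \<sigma> B = (if \<forall>a\<in>L. \<sigma> a = a then B else A)"
  shows "aut_QL k L (mat_act_pair A B)"
  unfolding aut_QL_def geom_aut_def
proof (intro conjI ballI)
  show "\<exists>A' B'. invertible2 A' \<and> invertible2 B' \<and>
      ((\<forall>z\<in>QP. mat_act_pair A B z = (mat_act A' (fst z), mat_act B' (snd z))) \<or>
       (\<forall>z\<in>QP. mat_act_pair A B z = (mat_act A' (snd z), mat_act B' (fst z))))"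
    using assms(1,2) unfolding mat_act_pair_def by blast
next
  fix \<sigma> z assume "\<sigma> \<in> Gal k"
  then show "mat_act_pair A B (tw_act L \<sigma> z) = tw_act L \<sigma> (mat_act_pair A B z)"
    using assms(3) by (auto simp: mat_act_pair_def tw_act_def conj_pt_mat_act)
qed

lemma rational_point_iff:
  "rational_point k L (x, x') \<longleftrightarrow> x \<in> P1 \<and> x' \<in> P1 \<and>
     (\<forall>\<sigma>\<in>Gal k. conj_pt \<sigma> x = (if \<forall>a\<in>L. \<sigma> a = a then x else x') \<and>
                  conj_pt \<sigma> x' = (if \<forall>a\<in>L. \<sigma> a = a then x' else x))"
  unfolding rational_point_def QP_def tw_act_def by auto

lemma rational_vector_general_position:
  assumes "is_subfield k" "a \<in> P1" "b \<in> P1" "a \<noteq> b"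
  obtains t where "fst t \<in> k" "snd t \<in> k" "general_position t a b"
proof -
  have "proj_pt (1, 0) \<noteq> proj_pt (0::'a, 1)" "proj_pt (1, 0) \<noteq> proj_pt (1::'a, 1)"
    "proj_pt (0, 1) \<noteq> proj_pt (1::'a, 1)"
    by (simp_all add: proj_pt_eq_iff det2_def)
  moreover have "0 \<in> k" "1 \<in> k" using assms(1) by (simp_all add: is_subfield_def)
  ultimately show ?thesis
    using that assms(2-4) unfolding general_position_def by (metis fst_conv snd_conv zero_neq_one)
qed

lemma rational_vectors_general_position:
  assumes k: "is_subfield k"
    and r: "rational_point k L (x, x')" and s: "rational_point k L (y, y')"
    and "x \<noteq> y" "x' \<noteq> y'"
  obtains t t' where "fst t \<in> k" "snd t \<in> k" "general_position t x y"
    "fst t' \<in> k" "snd t' \<in> k" "general_position t' x' y'"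
    "(\<exists>\<sigma>\<in>Gal k. \<not> (\<forall>a\<in>L. \<sigma> a = a)) \<longrightarrow> t' = t"
proof -
  have P1: "x \<in> P1" "x' \<in> P1" "y \<in> P1" "y' \<in> P1"
    using r s by (simp_all add: rational_point_iff)
  obtain t where t: "fst t \<in> k" "snd t \<in> k" "general_position t x y"
    using rational_vector_general_position[OF k P1(1,3) \<open>x \<noteq> y\<close>] .
  show ?thesis
  proof (cases "\<exists>\<sigma>\<in>Gal k. \<not> (\<forall>a\<in>L. \<sigma> a = a)")
    case True
    then obtain \<sigma> where \<sigma>: "\<sigma> \<in> Gal k" "\<not> (\<forall>a\<in>L. \<sigma> a = a)" by blast
    then have "conj_pt \<sigma> x = x'" "conj_pt \<sigma> y = y'"
      using r s by (auto simp: rational_point_iff split: if_splits)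
    \<comment> \<open>t is Galois-invariant, so avoiding x and y it also avoids their conjugates x', y'\<close>
    moreover have "general_position t (conj_pt \<sigma> x) (conj_pt \<sigma> y)"
      using general_position_conj_pt[OF t(3) \<sigma>(1)] Gal_fixes[OF \<sigma>(1)] t(1,2) by blast
    ultimately show ?thesis using t that[of t t] by simp
  next
    case False
    obtain t' where "fst t' \<in> k" "snd t' \<in> k" "general_position t' x' y'"
      using rational_vector_general_position[OF k P1(2,4) \<open>x' \<noteq> y'\<close>] .
    with t False show ?thesis using that[of t t'] by blast
  qed
qed

lemma normalise_rational_points:
  assumes k: "is_subfield k"
    and r: "rational_point k L (x, x')" and s: "rational_point k L (y, y')"
    and "x \<noteq> y" "x' \<noteq> y'"
  obtains A B where "aut_QL k L (mat_act_pair A B)"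
    "mat_act A x = proj_pt (1, 0)" "mat_act A y = proj_pt (0, 1)"
    "mat_act B x' = proj_pt (1, 0)" "mat_act B y' = proj_pt (0, 1)"
proof -
  obtain t t' where t: "fst t \<in> k" "snd t \<in> k" "general_position t x y"
    and t': "fst t' \<in> k" "snd t' \<in> k" "general_position t' x' y'"
    and same: "(\<exists>\<sigma>\<in>Gal k. \<not> (\<forall>a\<in>L. \<sigma> a = a)) \<longrightarrow> t' = t"
    using rational_vectors_general_position[OF assms] .
  define A where "A = norm_mat t x y"
  define B where "B = norm_mat t' x' y'"
  have "aut_QL k L (mat_act_pair A B)"
  proof (rule aut_QL_mat_act_pair)
    show "invertible2 A" "invertible2 B"
      unfolding A_def B_def using t(3) t'(3) by (simp_all add: norm_mat_invertible)
    show "\<forall>\<sigma>\<in>Gal k. conj_mat \<sigma> A = (if \<forall>a\<in>L. \<sigma> a = a then A else B) \<and>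
                     conj_mat \<sigma> B = (if \<forall>a\<in>L. \<sigma> a = a then B else A)"
    proof
      fix \<sigma> assume "\<sigma> \<in> Gal k"
      then have "conj_mat \<sigma> A = norm_mat t (conj_pt \<sigma> x) (conj_pt \<sigma> y)"
        "conj_mat \<sigma> B = norm_mat t' (conj_pt \<sigma> x') (conj_pt \<sigma> y')"
        unfolding A_def B_def using t t' by (simp_all add: conj_mat_norm_mat Gal_fixes)
      with r s same \<open>\<sigma> \<in> Gal k\<close>
      show "conj_mat \<sigma> A = (if \<forall>a\<in>L. \<sigma> a = a then A else B) \<and>
            conj_mat \<sigma> B = (if \<forall>a\<in>L. \<sigma> a = a then B else A)"
        unfolding A_def B_def rational_point_iff by (auto split: if_splits)
    qed
  qed
  with mat_act_norm_mat[OF t(3)] mat_act_norm_mat[OF t'(3)] show ?thesis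
    unfolding A_def B_def by (intro that) blast+
qed

lemma conj_pt_nontrivial_Gal:
  assumes "is_subfield k" "quadratic_ext k L"
    and \<sigma>: "\<sigma> \<in> Gal k" "\<not> (\<forall>a\<in>L. \<sigma> a = a)" and \<tau>: "\<tau> \<in> Gal k" "\<not> (\<forall>a\<in>L. \<tau> a = a)"
    and "\<forall>\<rho>\<in>Gal L. conj_pt \<rho> c = c" "\<forall>\<rho>\<in>Gal L. conj_pt \<rho> (conj_pt \<tau> c) = conj_pt \<tau> c"
  shows "conj_pt \<sigma> c = conj_pt \<tau> c \<and> conj_pt \<sigma> (conj_pt \<tau> c) = c"
proof -
  have "\<sigma> \<circ> \<tau> \<in> Gal L" "\<tau> \<circ> \<tau> \<in> Gal L"
    using Gal_comp_nontrivial_in_Gal[OF assms(1,2)] \<sigma> \<tau> by blast+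
  then have "conj_pt (\<sigma> \<circ> \<tau>) c = c" "conj_pt (\<tau> \<circ> \<tau>) c = c"
    "conj_pt (\<sigma> \<circ> \<tau>) (conj_pt \<tau> c) = conj_pt \<tau> c"
    using assms(7,8) by blast+
  then show ?thesis by (metis conj_pt_comp)
qed

lemma degree_two_point_corners:
  assumes k: "is_subfield k" and L: "quadratic_ext k L"
    and deg: "closed_point_deg k L p 2"
    and ruling: "\<forall>z\<in>p. \<forall>w\<in>p. z \<noteq> w \<longrightarrow> \<not> same_ruling z w"
    and split: "splitting_field k L p L"
  obtains x x' y y' where "rational_point k L (x, x')" "rational_point k L (y, y')"
    "x \<noteq> y" "x' \<noteq> y'" "p = {(x, y'), (y, x')}"
proof -
  obtain a b where ab: "(a, b) \<in> QP" and orbit: "p = {tw_act L \<sigma> (a, b) | \<sigma>. \<sigma> \<in> Gal k}"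
    and "card p = 2"
    using deg unfolding closed_point_deg_def by auto
  have "tw_act L id (a, b) = (a, b)" by (simp add: tw_act_def conj_pt_id)
  then have "(a, b) \<in> p" unfolding orbit using id_in_Gal by force
  with \<open>card p = 2\<close> obtain w where w: "w \<in> p" "w \<noteq> (a, b)" "p = {(a, b), w}"
    unfolding card_2_iff by auto
  then obtain \<tau> where \<tau>: "\<tau> \<in> Gal k" "w = tw_act L \<tau> (a, b)" unfolding orbit by blast
  have over_L: "conj_pt \<rho> (fst u) = fst u \<and> conj_pt \<rho> (snd u) = snd u" if "u \<in> p" "\<rho> \<in> Gal L" for u \<rho>
    using split that Gal_fixes[OF that(2)]
    unfolding splitting_field_def defined_over_def tw_act_def by (metis fst_conv snd_conv)
  have \<tau>_nontrivial: "\<not> (\<forall>c\<in>L. \<tau> c = c)"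
    using over_L[OF \<open>(a, b) \<in> p\<close> in_Gal_if_fixes[OF \<tau>(1)]] w(2) \<tau>(2)
    by (auto simp: tw_act_def split: if_splits)
  then have w_eq: "w = (conj_pt \<tau> b, conj_pt \<tau> a)"
    using \<tau>(2) by (simp only: tw_act_def if_not_P) simp
  have fixed: "\<forall>\<rho>\<in>Gal L. conj_pt \<rho> c = c \<and> conj_pt \<rho> (conj_pt \<tau> c) = conj_pt \<tau> c"
    if "c \<in> {a, b}" for c
    using that over_L[OF \<open>(a, b) \<in> p\<close>] over_L[OF w(1)] w_eq by auto
  have Gal_action: "conj_pt \<sigma> c = (if \<forall>x\<in>L. \<sigma> x = x then c else conj_pt \<tau> c) \<and>
      conj_pt \<sigma> (conj_pt \<tau> c) = (if \<forall>x\<in>L. \<sigma> x = x then conj_pt \<tau> c else c)"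
    if "\<sigma> \<in> Gal k" "c \<in> {a, b}" for \<sigma> c
    using fixed[OF that(2)] in_Gal_if_fixes[OF that(1)]
      conj_pt_nontrivial_Gal[OF k L that(1) _ \<tau>(1) \<tau>_nontrivial] by auto
  have "a \<in> P1" "b \<in> P1" using ab by (simp_all add: QP_def)
  then have "rational_point k L (a, conj_pt \<tau> a)" "rational_point k L (conj_pt \<tau> b, b)"
    using Gal_action conj_pt_P1[OF \<tau>(1)] by (auto simp: rational_point_iff)
  moreover have "a \<noteq> conj_pt \<tau> b" "conj_pt \<tau> a \<noteq> b"
    using ruling \<open>(a, b) \<in> p\<close> w unfolding w_eq same_ruling_def by auto
  ultimately show ?thesis using w(3) unfolding w_eq by (rule that)
qed

theorem lemma3p6:
  fixes k L :: "'a::field set"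
  assumes "alg_closed_field TYPE('a)"
    and "is_subfield k"
    and "algebraic_over k"
    and "perfect_subfield k"
    and "quadratic_ext k L"
  shows
    "(\<forall>p. closed_point_deg k L p 2 \<and> (\<forall>z\<in>p. \<forall>w\<in>p. z \<noteq> w \<longrightarrow> \<not> same_ruling z w)
        \<and> splitting_field k L p L \<longrightarrow>
        (\<exists>\<alpha>. aut_QL k L \<alpha> \<and>
           \<alpha> ` p = {(proj_pt (1, 0), proj_pt (0, 1)), (proj_pt (0, 1), proj_pt (1, 0))}))
     \<and>
     (\<forall>r s. rational_point k L r \<and> rational_point k L s \<and> \<not> same_ruling r s \<longrightarrow>
        (\<exists>\<alpha>. aut_QL k L \<alpha> \<and> \<alpha> r = (proj_pt (1, 0), proj_pt (1, 0)) \<and>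
           \<alpha> s = (proj_pt (0, 1), proj_pt (0, 1))))"
proof (intro conjI allI impI; elim conjE)
  fix p assume "closed_point_deg k L p 2" "\<forall>z\<in>p. \<forall>w\<in>p. z \<noteq> w \<longrightarrow> \<not> same_ruling z w"
    "splitting_field k L p L"
  then obtain x x' y y' where "rational_point k L (x, x')" "rational_point k L (y, y')"
    "x \<noteq> y" "x' \<noteq> y'" and p: "p = {(x, y'), (y, x')}"
    using degree_two_point_corners[OF assms(2,5)] by metis
  then obtain A B where "aut_QL k L (mat_act_pair A B)"
    "mat_act A x = proj_pt (1, 0)" "mat_act A y = proj_pt (0, 1)"
    "mat_act B x' = proj_pt (1, 0)" "mat_act B y' = proj_pt (0, 1)"
    using normalise_rational_points[OF assms(2)] by metis
  then show "\<exists>\<alpha>. aut_QL k L \<alpha> \<and>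
      \<alpha> ` p = {(proj_pt (1, 0), proj_pt (0, 1)), (proj_pt (0, 1), proj_pt (1, 0))}"
    by (intro exI[of _ "mat_act_pair A B"]) (auto simp: p mat_act_pair_def)
next
  fix r s assume r: "rational_point k L r" and s: "rational_point k L s" and "\<not> same_ruling r s"
  obtain x x' y y' where rs: "r = (x, x')" "s = (y, y')" by fastforce
  with \<open>\<not> same_ruling r s\<close> have "x \<noteq> y" "x' \<noteq> y'" by (auto simp: same_ruling_def)
  with r s obtain A B where "aut_QL k L (mat_act_pair A B)"
    "mat_act A x = proj_pt (1, 0)" "mat_act A y = proj_pt (0, 1)"
    "mat_act B x' = proj_pt (1, 0)" "mat_act B y' = proj_pt (0, 1)"
    using normalise_rational_points[OF assms(2)] unfolding rs by metis
  then show "\<exists>\<alpha>. aut_QL k L \<alpha> \<and> \<alpha> r = (proj_pt (1, 0), proj_pt (1, 0)) \<and>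
      \<alpha> s = (proj_pt (0, 1), proj_pt (0, 1))"
    by (intro exI[of _ "mat_act_pair A B"]) (simp add: rs mat_act_pair_def)
qed

end
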